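(* Let $(A,G)$ be an admissible pair with $A\in M_{Q_0}(\mathbb Z)$ skew-symmetrizable. Then the quotient matrix $A/G$ is skew-symmetrizable.
   Context: $Q_0$ is a finite set. A matrix $B\in M_{Q_0}(\mathbb Z)$ is skew-symmetrizable if there is a diagonal integer matrix $D$ with non-negative (positive) diagonal entries such that $DB$ is skew-symmetric. An automorphism of $A=(a_{ij})$ is a permutation $g$ of $Q_0$ with $a_{gi,gj}=a_{ij}$ for all $i,j$; a group $G$ of such permutations is an automorphism group of $A$; it is admissible (and $(A,G)$ an admissible pair) if for distinct $i,j$ in the same $G$-orbit there is no path of length $1$ or $2$ from $i$ to $j$ in the valued quiver of $A$ (i.e. $a_{ij}\le0$ and no $k$ with $a_{ik}>0$, $a_{kj}>0$). With $\overline Q_0$ the set of $G$-orbits, the quotient matrix $A/G\in M_{\overline Q_0}(\mathbb Z)$ has entries $(A/G)_{\mathbf i,\mathbf j}=\sum_{k\in\mathbf i}a_{k,j}$ for any $j\in\mathbf j$. *)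

theory Defs
  imports "HOL-Combinatorics.Permutations"
begin

text \<open>Matrices indexed by a finite set Q are functions Q \<Rightarrow> Q \<Rightarrow> int (values outside Q irrelevant).\<close>

definition skew_symmetrizable :: "'q set \<Rightarrow> ('q \<Rightarrow> 'q \<Rightarrow> int) \<Rightarrow> bool" where
  "skew_symmetrizable Q B \<longleftrightarrow>
     (\<exists>d :: 'q \<Rightarrow> int. (\<forall>i\<in>Q. d i > 0) \<and>
        (\<forall>i\<in>Q. \<forall>j\<in>Q. d i * B i j = - (d j * B j i)))"

definition is_automorphism :: "'a set \<Rightarrow> ('a \<Rightarrow> 'a \<Rightarrow> int) \<Rightarrow> ('a \<Rightarrow> 'a) \<Rightarrow> bool" where
  "is_automorphism Q A g \<longleftrightarrow> g permutes Q \<and> (\<forall>i\<in>Q. \<forall>j\<in>Q. A (g i) (g j) = A i j)"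

definition automorphism_group :: "'a set \<Rightarrow> ('a \<Rightarrow> 'a \<Rightarrow> int) \<Rightarrow> ('a \<Rightarrow> 'a) set \<Rightarrow> bool" where
  "automorphism_group Q A G \<longleftrightarrow>
     (\<forall>g\<in>G. is_automorphism Q A g) \<and> id \<in> G \<and>
     (\<forall>g\<in>G. \<forall>h\<in>G. g \<circ> h \<in> G) \<and> (\<forall>g\<in>G. inv g \<in> G)"

definition orbit :: "('a \<Rightarrow> 'a) set \<Rightarrow> 'a \<Rightarrow> 'a set" where
  "orbit G i = (\<lambda>g. g i) ` G"

definition orbits :: "'a set \<Rightarrow> ('a \<Rightarrow> 'a) set \<Rightarrow> 'a set set" where
  "orbits Q G = orbit G ` Q"

definition admissible :: "'a set \<Rightarrow> ('a \<Rightarrow> 'a \<Rightarrow> int) \<Rightarrow> ('a \<Rightarrow> 'a) set \<Rightarrow> bool" where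
  "admissible Q A G \<longleftrightarrow> automorphism_group Q A G \<and>
     (\<forall>i\<in>Q. \<forall>j\<in>orbit G i. i \<noteq> j \<longrightarrow>
        A i j \<le> 0 \<and> \<not> (\<exists>k\<in>Q. A i k > 0 \<and> A k j > 0))"

definition quotient_matrix :: "('a \<Rightarrow> 'a \<Rightarrow> int) \<Rightarrow> 'a set \<Rightarrow> 'a set \<Rightarrow> int" where
  "quotient_matrix A I J = (\<Sum>k\<in>I. A k (SOME j. j \<in> J))"

end

theory Submission
  imports Defs
begin

text \<open>Averaging a skew-symmetrizer d over G, d'(i) = sum of d(g i) over g in G, gives a
  G-invariant skew-symmetrizer. For orbits I, J containing i, j, invariance of d' then gives
  d'(i) (A/G)(I,J) = - d'(j) (sum of A j k over k in I), and by G-invariance of A,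
  |J| (sum of A j k over k in I) = |I| (A/G)(J,I), both being the sum of A l k over J x I.
  The resulting factors |I|, |J| are cleared by multiplying d'(i) with the product of the
  sizes of all the other orbits.\<close>

lemma skew_symmetrizable_rescale:
  fixes B :: "'q \<Rightarrow> 'q \<Rightarrow> int" and d c :: "'q \<Rightarrow> int"
  assumes "finite Q"
    and d_pos: "\<And>i. i \<in> Q \<Longrightarrow> d i > 0"
    and c_pos: "\<And>i. i \<in> Q \<Longrightarrow> c i > 0"
    and skew: "\<And>i j. i \<in> Q \<Longrightarrow> j \<in> Q \<Longrightarrow> d i * c j * B i j = - (d j * c i * B j i)"
  shows "skew_symmetrizable Q B"
  unfolding skew_symmetrizable_def
proof (intro exI[of _ "\<lambda>i. d i * (\<Prod>k\<in>Q - {i}. c k)"] conjI ballI)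
  fix i assume "i \<in> Q"
  then show "d i * (\<Prod>k\<in>Q - {i}. c k) > 0"
    using d_pos c_pos by (intro mult_pos_pos prod_pos) auto
next
  fix i j assume i: "i \<in> Q" and j: "j \<in> Q"
  define P where "P = (\<Prod>k\<in>Q. c k)"
  have P_split: "c k * (\<Prod>k\<in>Q - {k}. c k) = P" if "k \<in> Q" for k
    unfolding P_def using prod.remove[OF \<open>finite Q\<close> that, of c] by simp
  have "(d i * (\<Prod>k\<in>Q - {i}. c k) * B i j) * (c i * c j) = P * (d i * c j * B i j)"
    using P_split[OF i] by (simp add: algebra_simps)
  also have "\<dots> = - (P * (d j * c i * B j i))"
    by (simp add: skew[OF i j])
  also have "\<dots> = (- (d j * (\<Prod>k\<in>Q - {j}. c k) * B j i)) * (c i * c j)"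
    using P_split[OF j] by (simp add: algebra_simps)
  finally show "d i * (\<Prod>k\<in>Q - {i}. c k) * B i j = - (d j * (\<Prod>k\<in>Q - {j}. c k) * B j i)"
    using c_pos[OF i] c_pos[OF j] by (subst (asm) mult_right_cancel) simp_all
qed

context
  fixes Q :: "'a set" and A :: "'a \<Rightarrow> 'a \<Rightarrow> int" and G :: "('a \<Rightarrow> 'a) set"
  assumes aut: "automorphism_group Q A G"
begin

lemma automorphism_group_permutes: "g \<in> G \<Longrightarrow> g permutes Q"
  using aut by (auto simp: automorphism_group_def is_automorphism_def)

lemma automorphism_group_apply:
  "g \<in> G \<Longrightarrow> i \<in> Q \<Longrightarrow> j \<in> Q \<Longrightarrow> A (g i) (g j) = A i j"
  using aut by (auto simp: automorphism_group_def is_automorphism_def)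

lemma automorphism_group_id: "id \<in> G"
  using aut by (simp add: automorphism_group_def)

lemma automorphism_group_comp: "g \<in> G \<Longrightarrow> h \<in> G \<Longrightarrow> g \<circ> h \<in> G"
  using aut by (simp add: automorphism_group_def)

lemma automorphism_group_inv: "g \<in> G \<Longrightarrow> inv g \<in> G"
  using aut by (simp add: automorphism_group_def)

lemma automorphism_group_finite: "finite Q \<Longrightarrow> finite G"
  using finite_permutations automorphism_group_permutes
  by (metis (mono_tags, lifting) finite_subset mem_Collect_eq subsetI)

lemma bij_betw_comp_right: "h \<in> G \<Longrightarrow> bij_betw (\<lambda>g. g \<circ> h) G G"
  by (rule bij_betwI[where g = "\<lambda>g. g \<circ> inv h"])
    (simp_all add: automorphism_group_comp automorphism_group_inv o_assoc[symmetric]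
      permutes_inv_o[OF automorphism_group_permutes])

lemma bij_betw_comp_left: "h \<in> G \<Longrightarrow> bij_betw (\<lambda>g. h \<circ> g) G G"
  by (rule bij_betwI[where g = "\<lambda>g. inv h \<circ> g"])
    (simp_all add: automorphism_group_comp automorphism_group_inv o_assoc
      permutes_inv_o[OF automorphism_group_permutes])

lemma orbit_subset: "i \<in> Q \<Longrightarrow> orbit G i \<subseteq> Q"
  by (auto simp: orbit_def permutes_in_image automorphism_group_permutes)

lemma in_orbit_self: "i \<in> orbit G i"
  using automorphism_group_id unfolding orbit_def by (metis id_apply image_eqI)

lemma image_orbit: "g \<in> G \<Longrightarrow> g ` orbit G i = orbit G i"
proof -
  assume "g \<in> G"
  have "g ` orbit G i = (\<lambda>f. f i) ` (\<lambda>f. g \<circ> f) ` G"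
    by (simp add: orbit_def image_image)
  then show ?thesis
    using bij_betw_imp_surj_on[OF bij_betw_comp_left[OF \<open>g \<in> G\<close>]] by (simp add: orbit_def)
qed

lemma finite_orbit: "finite Q \<Longrightarrow> finite (orbit G i)"
  by (simp add: orbit_def automorphism_group_finite)

lemma sum_orbit_reindex: "g \<in> G \<Longrightarrow> (\<Sum>k\<in>orbit G i. f (g k)) = (\<Sum>k\<in>orbit G i. f k)"
  using sum.reindex[OF permutes_inj_on[OF automorphism_group_permutes], of g f "orbit G i"]
  by (simp add: image_orbit)

lemma sum_orbit_apply_row:
  assumes "g \<in> G" "l \<in> Q" "i \<in> Q"
  shows "(\<Sum>k\<in>orbit G i. A (g l) k) = (\<Sum>k\<in>orbit G i. A l k)"
proof -
  have "(\<Sum>k\<in>orbit G i. A (g l) k) = (\<Sum>k\<in>orbit G i. A (g l) (g k))"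
    using sum_orbit_reindex[OF \<open>g \<in> G\<close>, where f = "A (g l)"] by simp
  also have "\<dots> = (\<Sum>k\<in>orbit G i. A l k)"
    using assms orbit_subset by (intro sum.cong) (auto intro: automorphism_group_apply)
  finally show ?thesis .
qed

lemma sum_orbit_apply_col:
  assumes "g \<in> G" "l \<in> Q" "i \<in> Q"
  shows "(\<Sum>k\<in>orbit G i. A k (g l)) = (\<Sum>k\<in>orbit G i. A k l)"
proof -
  have "(\<Sum>k\<in>orbit G i. A k (g l)) = (\<Sum>k\<in>orbit G i. A (g k) (g l))"
    using sum_orbit_reindex[OF \<open>g \<in> G\<close>, where f = "\<lambda>k. A k (g l)"] by simp
  also have "\<dots> = (\<Sum>k\<in>orbit G i. A k l)"
    using assms orbit_subset by (intro sum.cong) (auto intro: automorphism_group_apply)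
  finally show ?thesis .
qed

lemma some_in_orbit: obtains h where "h \<in> G" "(SOME x. x \<in> orbit G i) = h i"
  using someI[of "\<lambda>x. x \<in> orbit G i", OF in_orbit_self] by (auto simp: orbit_def)

lemma quotient_matrix_orbit:
  assumes "i \<in> Q" "j \<in> Q"
  shows "quotient_matrix A (orbit G i) (orbit G j) = (\<Sum>k\<in>orbit G i. A k j)"
proof -
  obtain h where "h \<in> G" "(SOME x. x \<in> orbit G j) = h j"
    by (rule some_in_orbit)
  then show ?thesis
    unfolding quotient_matrix_def using sum_orbit_apply_col assms by simp
qed

lemma card_orbit_mult_sum_orbit:
  assumes "i \<in> Q" "j \<in> Q"
  shows "int (card (orbit G j)) * (\<Sum>k\<in>orbit G i. A j k)
    = int (card (orbit G i)) * (\<Sum>l\<in>orbit G j. A l i)"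
proof -
  have rows: "(\<Sum>k\<in>orbit G i. A l k) = (\<Sum>k\<in>orbit G i. A j k)" if "l \<in> orbit G j" for l
    using that assms sum_orbit_apply_row by (auto simp: orbit_def)
  have cols: "(\<Sum>l\<in>orbit G j. A l k) = (\<Sum>l\<in>orbit G j. A l i)" if "k \<in> orbit G i" for k
    using that assms sum_orbit_apply_col by (auto simp: orbit_def)
  have "int (card (orbit G j)) * (\<Sum>k\<in>orbit G i. A j k)
      = (\<Sum>l\<in>orbit G j. \<Sum>k\<in>orbit G i. A l k)"
    by (simp add: rows)
  also have "\<dots> = (\<Sum>k\<in>orbit G i. \<Sum>l\<in>orbit G j. A l k)"
    by (rule sum.swap)
  also have "\<dots> = int (card (orbit G i)) * (\<Sum>l\<in>orbit G j. A l i)"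
    by (simp add: cols)
  finally show ?thesis .
qed

lemma invariant_skew_symmetrizer:
  assumes "finite Q" "skew_symmetrizable Q A"
  obtains d :: "'a \<Rightarrow> int"
  where "\<And>i. i \<in> Q \<Longrightarrow> d i > 0"
    and "\<And>i j. i \<in> Q \<Longrightarrow> j \<in> Q \<Longrightarrow> d i * A i j = - (d j * A j i)"
    and "\<And>h i. h \<in> G \<Longrightarrow> d (h i) = d i"
proof -
  obtain d0 where d0_pos: "\<forall>i\<in>Q. d0 i > 0"
    and d0_skew: "\<forall>i\<in>Q. \<forall>j\<in>Q. d0 i * A i j = - (d0 j * A j i)"
    using assms(2) unfolding skew_symmetrizable_def by blast
  define d where "d i = (\<Sum>g\<in>G. d0 (g i))" for i
  have in_Q: "g i \<in> Q" if "g \<in> G" "i \<in> Q" for g i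
    using that by (simp add: automorphism_group_permutes permutes_in_image)
  have "d i > 0" if "i \<in> Q" for i
    unfolding d_def using automorphism_group_finite[OF assms(1)] automorphism_group_id d0_pos in_Q that
    by (intro sum_pos) auto
  moreover have "d i * A i j = - (d j * A j i)" if "i \<in> Q" "j \<in> Q" for i j
  proof -
    have "d i * A i j = (\<Sum>g\<in>G. d0 (g i) * A (g i) (g j))"
      unfolding d_def sum_distrib_right using that
      by (intro sum.cong) (simp_all only: automorphism_group_apply)
    also have "\<dots> = (\<Sum>g\<in>G. - (d0 (g j) * A (g j) (g i)))"
      using d0_skew in_Q that by (intro sum.cong refl) blast
    also have "\<dots> = - (d j * A j i)"
      unfolding d_def sum_distrib_right sum_negf using that
      by (intro arg_cong[where f = uminus] sum.cong) (simp_all only: automorphism_group_apply)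
    finally show ?thesis .
  qed
  moreover have "d (h i) = d i" if "h \<in> G" for h i
    unfolding d_def using sum.reindex_bij_betw[OF bij_betw_comp_right[OF that], of "\<lambda>g. d0 (g i)"]
    by simp
  ultimately show thesis
    by (rule that)
qed

lemma quotient_matrix_skew:
  assumes "i \<in> Q" "j \<in> Q"
    and skew: "\<And>i j. i \<in> Q \<Longrightarrow> j \<in> Q \<Longrightarrow> d i * A i j = - (d j * A j i)"
    and invariant: "\<And>h i. h \<in> G \<Longrightarrow> d (h i) = d i"
  shows "d i * int (card (orbit G j)) * quotient_matrix A (orbit G i) (orbit G j)
    = - (d j * int (card (orbit G i)) * quotient_matrix A (orbit G j) (orbit G i))"
proof -
  have d_orbit: "d k = d i" if "k \<in> orbit G i" for k
    using that invariant by (auto simp: orbit_def)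
  have "d i * (\<Sum>k\<in>orbit G i. A k j) = (\<Sum>k\<in>orbit G i. d k * A k j)"
    unfolding sum_distrib_left by (rule sum.cong) (simp_all add: d_orbit)
  also have "\<dots> = - (d j * (\<Sum>k\<in>orbit G i. A j k))"
    unfolding sum_distrib_left sum_negf[symmetric]
    using assms(1,2) orbit_subset by (intro sum.cong) (auto intro: skew)
  finally have row: "d i * (\<Sum>k\<in>orbit G i. A k j) = - (d j * (\<Sum>k\<in>orbit G i. A j k))" .
  have "d i * int (card (orbit G j)) * quotient_matrix A (orbit G i) (orbit G j)
      = int (card (orbit G j)) * (d i * (\<Sum>k\<in>orbit G i. A k j))"
    using assms(1,2) by (simp add: quotient_matrix_orbit)
  also have "\<dots> = - (d j * (int (card (orbit G j)) * (\<Sum>k\<in>orbit G i. A j k)))"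
    unfolding row by simp
  also have "\<dots> = - (d j * int (card (orbit G i)) * quotient_matrix A (orbit G j) (orbit G i))"
    using assms(1,2) by (simp add: card_orbit_mult_sum_orbit quotient_matrix_orbit)
  finally show ?thesis .
qed

lemma skew_symmetrizable_quotient_matrix:
  assumes "finite Q" "skew_symmetrizable Q A"
  shows "skew_symmetrizable (orbits Q G) (quotient_matrix A)"
proof -
  obtain d where d_pos: "\<And>i. i \<in> Q \<Longrightarrow> d i > 0"
    and d_skew: "\<And>i j. i \<in> Q \<Longrightarrow> j \<in> Q \<Longrightarrow> d i * A i j = - (d j * A j i)"
    and d_invariant: "\<And>h i. h \<in> G \<Longrightarrow> d (h i) = d i"
    using invariant_skew_symmetrizer[OF assms] by blast
  define d_orbits where "d_orbits I = d (SOME i. i \<in> I)" for I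
  have d_orbits_orbit: "d_orbits (orbit G i) = d i" for i
    using some_in_orbit[of i] d_invariant unfolding d_orbits_def by metis
  show ?thesis
  proof (rule skew_symmetrizable_rescale[where d = d_orbits and c = "\<lambda>I. int (card I)"])
    show "finite (orbits Q G)"
      using assms(1) by (simp add: orbits_def)
  next
    fix I assume "I \<in> orbits Q G"
    then obtain i where "i \<in> Q" "I = orbit G i"
      by (auto simp: orbits_def)
    then show "d_orbits I > 0" "int (card I) > 0"
      using d_pos d_orbits_orbit finite_orbit[OF assms(1)] in_orbit_self
      by (auto simp: card_gt_0_iff) blast
  next
    fix I J assume "I \<in> orbits Q G" "J \<in> orbits Q G"
    then obtain i j where i: "i \<in> Q" "I = orbit G i" and j: "j \<in> Q" "J = orbit G j"
      by (auto simp: orbits_def)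
    have "d i * int (card J) * quotient_matrix A I J = - (d j * int (card I) * quotient_matrix A J I)"
      unfolding i(2) j(2)
      by (rule quotient_matrix_skew[OF i(1) j(1)]) (fact d_skew, fact d_invariant)
    then show "d_orbits I * int (card J) * quotient_matrix A I J
        = - (d_orbits J * int (card I) * quotient_matrix A J I)"
      using i(2) j(2) d_orbits_orbit by simp
  qed
qed

end

theorem mainTheorem7:
  fixes Q0 :: "'a set" and A :: "'a \<Rightarrow> 'a \<Rightarrow> int" and G :: "('a \<Rightarrow> 'a) set"
  assumes "finite Q0"
    and "admissible Q0 A G"
    and "skew_symmetrizable Q0 A"
  shows "skew_symmetrizable (orbits Q0 G) (quotient_matrix A)"
  using assms skew_symmetrizable_quotient_matrix unfolding admissible_def by blast

end
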